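(* Let $M_1$ and $M_2$ be finite-horizon MDPs with the same state space $\mathcal S$, action space $\mathcal A$, reward space $\mathcal R$ and horizon $H$. If $\max_{s,a}\|P^{M_1}(\cdot\mid s,a)-P^{M_2}(\cdot\mid s,a)\|_1\le\tilde\epsilon_P$ and $\max_{s,a,r}|R^{M_1}(r\mid s,a)-R^{M_2}(r\mid s,a)|\le\tilde\epsilon_R$, then for every policy $\pi$, $$\|\rho_\pi^{M_1}(s)-\rho_\pi^{M_2}(s)\|_1+\|\rho_\pi^{M_1}(s,a,r)-\rho_\pi^{M_2}(s,a,r)\|_1\le|\mathcal S|(|\mathcal A||\mathcal R|+1)\frac{H-1}{2}\tilde\epsilon_P+|\mathcal S||\mathcal A||\mathcal R|\tilde\epsilon_R.$$
   Context: Finite-horizon MDPs have finite spaces, a common fixed initial state $s_0$, and the state space partitioned into disjoint timestep layers $\mathcal S_h$. Visitation distributions of $\pi$ in an MDP with transition $P$ and reward distribution $R$: $\rho_\pi(s_0)=1/H$, $\rho_\pi(s)=\sum_{\tilde s\in\mathcal S_{h-1},\tilde a}\rho_\pi(\tilde s)\pi(\tilde a\mid\tilde s)P(s\mid\tilde s,\tilde a)$ for $s\in\mathcal S_h$, $h>0$; $\rho_\pi(s,a,r)=\rho_\pi(s)\pi(a\mid s)R(r\mid s,a)$. *)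

theory Defs
  imports Complex_Main
begin

text \<open>The state space is partitioned into layers given by layer :: 's => nat (layer s = h
  means s is in S_h), with horizon H, so layers are 0..H-1, and S_0 = {s0}.
  P s a s' is the transition probability P(s' | s, a), R s a r is R(r | s, a).
  Transitions from layer h (h+1 < H) go to layer h+1; transitions out of the last
  layer are unconstrained (they never matter).\<close>

definition stoch :: "('x::finite \<Rightarrow> real) \<Rightarrow> bool" where
  "stoch p \<longleftrightarrow> (\<forall>x. 0 \<le> p x) \<and> (\<Sum>x\<in>UNIV. p x) = 1"

definition fh_mdp ::
  "nat \<Rightarrow> ('s::finite \<Rightarrow> nat) \<Rightarrow> 's \<Rightarrow> ('s \<Rightarrow> 'a::finite \<Rightarrow> 's \<Rightarrow> real)
     \<Rightarrow> ('s \<Rightarrow> 'a \<Rightarrow> 'r::finite \<Rightarrow> real) \<Rightarrow> bool" where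
  "fh_mdp H layer s0 P R \<longleftrightarrow>
     1 \<le> H \<and>
     (\<forall>s. layer s < H) \<and>
     (\<forall>s. layer s = 0 \<longleftrightarrow> s = s0) \<and>
     (\<forall>s a. stoch (P s a)) \<and>
     (\<forall>s a. stoch (R s a)) \<and>
     (\<forall>s a s'. layer s + 1 < H \<and> P s a s' \<noteq> 0 \<longrightarrow> layer s' = layer s + 1)"

definition policy :: "('s::finite \<Rightarrow> 'a::finite \<Rightarrow> real) \<Rightarrow> bool" where
  "policy \<pi> \<longleftrightarrow> (\<forall>s. stoch (\<pi> s))"

fun vis_layer ::
  "nat \<Rightarrow> ('s::finite \<Rightarrow> nat) \<Rightarrow> 's \<Rightarrow> ('s \<Rightarrow> 'a::finite \<Rightarrow> 's \<Rightarrow> real)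
     \<Rightarrow> ('s \<Rightarrow> 'a \<Rightarrow> real) \<Rightarrow> nat \<Rightarrow> 's \<Rightarrow> real" where
  "vis_layer H layer s0 P \<pi> 0 s = (if s = s0 then 1 / real H else 0)"
| "vis_layer H layer s0 P \<pi> (Suc h) s =
     (\<Sum>t\<in>{t. layer t = h}. \<Sum>a\<in>UNIV. vis_layer H layer s0 P \<pi> h t * \<pi> t a * P t a s)"

definition rho_s ::
  "nat \<Rightarrow> ('s::finite \<Rightarrow> nat) \<Rightarrow> 's \<Rightarrow> ('s \<Rightarrow> 'a::finite \<Rightarrow> 's \<Rightarrow> real)
     \<Rightarrow> ('s \<Rightarrow> 'a \<Rightarrow> real) \<Rightarrow> 's \<Rightarrow> real" where
  "rho_s H layer s0 P \<pi> s = vis_layer H layer s0 P \<pi> (layer s) s"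

definition rho_sar ::
  "nat \<Rightarrow> ('s::finite \<Rightarrow> nat) \<Rightarrow> 's \<Rightarrow> ('s \<Rightarrow> 'a::finite \<Rightarrow> 's \<Rightarrow> real)
     \<Rightarrow> ('s \<Rightarrow> 'a \<Rightarrow> 'r::finite \<Rightarrow> real) \<Rightarrow> ('s \<Rightarrow> 'a \<Rightarrow> real) \<Rightarrow> 's \<Rightarrow> 'a \<Rightarrow> 'r \<Rightarrow> real" where
  "rho_sar H layer s0 P R \<pi> s a r = rho_s H layer s0 P \<pi> s * \<pi> s a * R s a r"

end

theory Submission
  imports Defs
begin

text \<open>Write v1 h and v2 h for the visitation vectors of layer h in the two MDPs. Layer h + 1
  is the mixture of the kernels P_i t a with weights v_i h t * pi t a, so one step increases the
  L1 distance by at most (mass of v2 h) * epsP, which is at most epsP / H. Hence the distance in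
  layer h is at most h * epsP / H, and summing over the H layers bounds the distance of the state
  distributions by (H - 1) / 2 * epsP. The splitting
  rho1 pi R1 - rho2 pi R2 = (rho1 - rho2) pi R1 + rho2 pi (R1 - R2) bounds the distance of the
  state-action-reward distributions by the same quantity plus |R| * epsR; the claimed bound is a
  coarsening of the sum of the two.\<close>

lemma stoch_nonneg: "stoch p \<Longrightarrow> 0 \<le> p x"
  by (simp add: stoch_def)

lemma stoch_sum: "stoch p \<Longrightarrow> (\<Sum>x\<in>UNIV. p x) = 1"
  by (simp add: stoch_def)

lemma abs_diff_mult_le:
  fixes a1 a2 b1 b2 :: "'a::linordered_idom"
  assumes "0 \<le> a2" "0 \<le> b1"
  shows "\<bar>a1 * b1 - a2 * b2\<bar> \<le> \<bar>a1 - a2\<bar> * b1 + a2 * \<bar>b1 - b2\<bar>"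
proof -
  have "a1 * b1 - a2 * b2 = (a1 - a2) * b1 + a2 * (b1 - b2)"
    by (simp add: algebra_simps)
  also have "\<bar>\<dots>\<bar> \<le> \<bar>a1 - a2\<bar> * b1 + a2 * \<bar>b1 - b2\<bar>"
    using abs_triangle_ineq[of "(a1 - a2) * b1" "a2 * (b1 - b2)"] assms
    by (simp add: abs_mult)
  finally show ?thesis .
qed

lemma sum_abs_diff_scaled_le:
  fixes p1 p2 :: "'y::finite \<Rightarrow> real"
  assumes "stoch p1" "0 \<le> c2"
  shows "(\<Sum>y\<in>UNIV. \<bar>c1 * p1 y - c2 * p2 y\<bar>) \<le> \<bar>c1 - c2\<bar> + c2 * (\<Sum>y\<in>UNIV. \<bar>p1 y - p2 y\<bar>)"
proof -
  have "(\<Sum>y\<in>UNIV. \<bar>c1 * p1 y - c2 * p2 y\<bar>)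
      \<le> (\<Sum>y\<in>UNIV. \<bar>c1 - c2\<bar> * p1 y + c2 * \<bar>p1 y - p2 y\<bar>)"
    using assms by (intro sum_mono abs_diff_mult_le) (simp_all add: stoch_nonneg)
  also have "\<dots> = \<bar>c1 - c2\<bar> + c2 * (\<Sum>y\<in>UNIV. \<bar>p1 y - p2 y\<bar>)"
    using assms by (simp add: sum.distrib sum_distrib_left[symmetric] stoch_sum)
  finally show ?thesis .
qed

lemma sum_abs_diff_mixture_le:
  fixes K1 K2 :: "'x \<Rightarrow> 'y::finite \<Rightarrow> real"
  assumes "finite X"
    and "\<And>x. x \<in> X \<Longrightarrow> stoch (K1 x)"
    and "\<And>x. x \<in> X \<Longrightarrow> 0 \<le> v2 x"
    and "\<And>x. x \<in> X \<Longrightarrow> (\<Sum>y\<in>UNIV. \<bar>K1 x y - K2 x y\<bar>) \<le> \<epsilon>"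
  shows "(\<Sum>y\<in>UNIV. \<bar>\<Sum>x\<in>X. v1 x * K1 x y - v2 x * K2 x y\<bar>)
           \<le> (\<Sum>x\<in>X. \<bar>v1 x - v2 x\<bar>) + sum v2 X * \<epsilon>"
proof -
  have "(\<Sum>y\<in>UNIV. \<bar>\<Sum>x\<in>X. v1 x * K1 x y - v2 x * K2 x y\<bar>)
      \<le> (\<Sum>y\<in>UNIV. \<Sum>x\<in>X. \<bar>v1 x * K1 x y - v2 x * K2 x y\<bar>)"
    by (intro sum_mono sum_abs)
  also have "\<dots> = (\<Sum>x\<in>X. \<Sum>y\<in>UNIV. \<bar>v1 x * K1 x y - v2 x * K2 x y\<bar>)"
    by (rule sum.swap)
  also have "\<dots> \<le> (\<Sum>x\<in>X. \<bar>v1 x - v2 x\<bar> + v2 x * \<epsilon>)"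
  proof (rule sum_mono)
    fix x assume x: "x \<in> X"
    have "(\<Sum>y\<in>UNIV. \<bar>v1 x * K1 x y - v2 x * K2 x y\<bar>)
        \<le> \<bar>v1 x - v2 x\<bar> + v2 x * (\<Sum>y\<in>UNIV. \<bar>K1 x y - K2 x y\<bar>)"
      using x assms by (intro sum_abs_diff_scaled_le) simp_all
    also have "\<dots> \<le> \<bar>v1 x - v2 x\<bar> + v2 x * \<epsilon>"
      using x assms by (intro add_left_mono mult_left_mono) simp_all
    finally show "(\<Sum>y\<in>UNIV. \<bar>v1 x * K1 x y - v2 x * K2 x y\<bar>) \<le> \<bar>v1 x - v2 x\<bar> + v2 x * \<epsilon>" .
  qed
  also have "\<dots> = (\<Sum>x\<in>X. \<bar>v1 x - v2 x\<bar>) + sum v2 X * \<epsilon>"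
    by (simp add: sum.distrib sum_distrib_right)
  finally show ?thesis .
qed

lemma sum_mixture_stoch:
  fixes K :: "'x \<Rightarrow> 'y::finite \<Rightarrow> real"
  assumes "\<And>x. x \<in> X \<Longrightarrow> stoch (K x)"
  shows "(\<Sum>y\<in>UNIV. \<Sum>x\<in>X. v x * K x y) = sum v X"
  using assms by (subst sum.swap) (simp add: sum_distrib_left[symmetric] stoch_sum)

lemma sum_times_policy:
  assumes "policy \<pi>"
  shows "(\<Sum>(t, a)\<in>T \<times> UNIV. f t * \<pi> t a) = sum f T"
  using assms
  by (simp add: sum.cartesian_product[symmetric] sum_distrib_left[symmetric] policy_def stoch_sum)

lemma sum_over_layers:
  fixes layer :: "'s::finite \<Rightarrow> nat"
  assumes "\<And>s. layer s < H"
  shows "(\<Sum>s\<in>UNIV. f s) = (\<Sum>h<H. \<Sum>s\<in>{s. layer s = h}. f s)"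
proof -
  have "layer ` UNIV \<subseteq> {..<H}" using assms by auto
  from sum.group[OF finite finite_lessThan this, of f] show ?thesis by simp
qed

lemma vis_layer_Suc_mixture:
  "vis_layer H layer s0 P \<pi> (Suc h) s
     = (\<Sum>(t, a)\<in>{t. layer t = h} \<times> UNIV. vis_layer H layer s0 P \<pi> h t * \<pi> t a * P t a s)"
  by (simp add: sum.cartesian_product)

lemma vis_layer_nonneg:
  fixes P :: "'s::finite \<Rightarrow> 'a::finite \<Rightarrow> 's \<Rightarrow> real"
  assumes "\<And>s a. stoch (P s a)" "policy \<pi>"
  shows "0 \<le> vis_layer H layer s0 P \<pi> h s"
proof (induction h arbitrary: s)
  case 0 then show ?case by simp
next
  case (Suc h)
  have "0 \<le> \<pi> t a" "0 \<le> P t a s" for t a s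
    using assms by (simp_all add: policy_def stoch_nonneg)
  with Suc show ?case by (auto intro!: sum_nonneg mult_nonneg_nonneg)
qed

lemma sum_vis_layer_le:
  fixes P :: "'s::finite \<Rightarrow> 'a::finite \<Rightarrow> 's \<Rightarrow> real"
  assumes P: "\<And>s a. stoch (P s a)" and \<pi>: "policy \<pi>"
  shows "(\<Sum>s\<in>{s. layer s = h}. vis_layer H layer s0 P \<pi> h s) \<le> 1 / real H"
proof (induction h)
  case 0
  show ?case by (simp add: sum.delta[OF finite])
next
  case (Suc h)
  let ?v = "vis_layer H layer s0 P \<pi>"
  let ?X = "{t. layer t = h} \<times> (UNIV :: 'a set)"
  define w where "w = (\<lambda>(t, a). ?v h t * \<pi> t a)"
  have "(\<Sum>s\<in>{s. layer s = Suc h}. ?v (Suc h) s) \<le> (\<Sum>s\<in>UNIV. ?v (Suc h) s)"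
    using P \<pi> by (intro sum_mono2) (simp_all add: vis_layer_nonneg del: vis_layer.simps)
  also have "\<dots> = (\<Sum>s\<in>UNIV. \<Sum>x\<in>?X. w x * P (fst x) (snd x) s)"
    unfolding vis_layer_Suc_mixture by (simp add: w_def split_beta)
  also have "\<dots> = sum w ?X"
    by (rule sum_mixture_stoch) (simp add: P)
  also have "\<dots> = (\<Sum>t\<in>{t. layer t = h}. ?v h t)"
    unfolding w_def by (rule sum_times_policy[OF \<pi>])
  finally show ?case using Suc by simp
qed

lemma sum_abs_vis_layer_diff_le:
  fixes P1 P2 :: "'s::finite \<Rightarrow> 'a::finite \<Rightarrow> 's \<Rightarrow> real"
  assumes P1: "\<And>s a. stoch (P1 s a)" and P2: "\<And>s a. stoch (P2 s a)"
    and \<pi>: "policy \<pi>"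
    and \<epsilon>: "\<And>s a. (\<Sum>s'\<in>UNIV. \<bar>P1 s a s' - P2 s a s'\<bar>) \<le> \<epsilon>"
  shows "(\<Sum>s\<in>{s. layer s = h}. \<bar>vis_layer H layer s0 P1 \<pi> h s - vis_layer H layer s0 P2 \<pi> h s\<bar>)
           \<le> real h * \<epsilon> / real H"
proof (induction h)
  case 0 then show ?case by simp
next
  case (Suc h)
  let ?v1 = "vis_layer H layer s0 P1 \<pi>" and ?v2 = "vis_layer H layer s0 P2 \<pi>"
  let ?X = "{t. layer t = h} \<times> (UNIV :: 'a set)"
  define w1 where "w1 = (\<lambda>(t, a). ?v1 h t * \<pi> t a)"
  define w2 where "w2 = (\<lambda>(t, a). ?v2 h t * \<pi> t a)"
  have \<pi>_nonneg: "0 \<le> \<pi> t a" for t a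
    using \<pi> by (simp add: policy_def stoch_nonneg)
  have \<epsilon>_nonneg: "0 \<le> \<epsilon>"
    using \<epsilon> by (meson order_trans sum_nonneg abs_ge_zero)
  have "(\<Sum>s\<in>{s. layer s = Suc h}. \<bar>?v1 (Suc h) s - ?v2 (Suc h) s\<bar>)
      \<le> (\<Sum>s\<in>UNIV. \<bar>?v1 (Suc h) s - ?v2 (Suc h) s\<bar>)"
    by (intro sum_mono2) simp_all
  also have "\<dots> = (\<Sum>s\<in>UNIV. \<bar>\<Sum>x\<in>?X. w1 x * P1 (fst x) (snd x) s - w2 x * P2 (fst x) (snd x) s\<bar>)"
    unfolding vis_layer_Suc_mixture sum_subtractf by (simp add: w1_def w2_def split_beta)
  also have "\<dots> \<le> (\<Sum>x\<in>?X. \<bar>w1 x - w2 x\<bar>) + sum w2 ?X * \<epsilon>"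
    by (rule sum_abs_diff_mixture_le)
       (auto simp: P1 P2 \<pi> \<epsilon> \<pi>_nonneg vis_layer_nonneg w2_def)
  also have "\<dots> = (\<Sum>t\<in>{t. layer t = h}. \<bar>?v1 h t - ?v2 h t\<bar>)
                 + (\<Sum>t\<in>{t. layer t = h}. ?v2 h t) * \<epsilon>"
    using \<pi>_nonneg sum_times_policy[OF \<pi>, of "\<lambda>t. \<bar>?v1 h t - ?v2 h t\<bar>"]
      sum_times_policy[OF \<pi>, of "?v2 h"]
    by (simp add: w1_def w2_def left_diff_distrib[symmetric] abs_mult split_beta)
  also have "\<dots> \<le> real h * \<epsilon> / real H + 1 / real H * \<epsilon>"
    using sum_vis_layer_le[of P2, OF P2 \<pi>]
    by (intro add_mono Suc mult_right_mono \<epsilon>_nonneg)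
  also have "\<dots> = real (Suc h) * \<epsilon> / real H"
    by (simp add: add_divide_distrib algebra_simps)
  finally show ?case .
qed

lemma sum_rho_s_le_1:
  fixes P :: "'s::finite \<Rightarrow> 'a::finite \<Rightarrow> 's \<Rightarrow> real"
  assumes P: "\<And>s a. stoch (P s a)" and \<pi>: "policy \<pi>" and layer: "\<And>s. layer s < H"
  shows "(\<Sum>s\<in>UNIV. rho_s H layer s0 P \<pi> s) \<le> 1"
proof -
  have "(\<Sum>s\<in>UNIV. rho_s H layer s0 P \<pi> s)
      = (\<Sum>h<H. \<Sum>s\<in>{s. layer s = h}. vis_layer H layer s0 P \<pi> h s)"
    unfolding sum_over_layers[of layer H, OF layer] by (intro sum.cong) (auto simp: rho_s_def)
  also have "\<dots> \<le> (\<Sum>h<H. 1 / real H)"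
    using sum_vis_layer_le[of P, OF P \<pi>] by (intro sum_mono)
  also have "\<dots> \<le> 1" by simp
  finally show ?thesis .
qed

lemma sum_abs_rho_s_diff_le:
  fixes P1 P2 :: "'s::finite \<Rightarrow> 'a::finite \<Rightarrow> 's \<Rightarrow> real"
  assumes P1: "\<And>s a. stoch (P1 s a)" and P2: "\<And>s a. stoch (P2 s a)"
    and \<pi>: "policy \<pi>"
    and \<epsilon>: "\<And>s a. (\<Sum>s'\<in>UNIV. \<bar>P1 s a s' - P2 s a s'\<bar>) \<le> \<epsilon>"
    and layer: "\<And>s. layer s < H"
  shows "(\<Sum>s\<in>UNIV. \<bar>rho_s H layer s0 P1 \<pi> s - rho_s H layer s0 P2 \<pi> s\<bar>)
           \<le> (real H - 1) / 2 * \<epsilon>"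
proof -
  have gauss: "(\<Sum>h<n. real h) = real n * (real n - 1) / 2" for n
    by (induction n) (simp_all add: field_simps)
  have "(\<Sum>s\<in>UNIV. \<bar>rho_s H layer s0 P1 \<pi> s - rho_s H layer s0 P2 \<pi> s\<bar>)
      = (\<Sum>h<H. \<Sum>s\<in>{s. layer s = h}.
           \<bar>vis_layer H layer s0 P1 \<pi> h s - vis_layer H layer s0 P2 \<pi> h s\<bar>)"
    unfolding sum_over_layers[of layer H, OF layer] by (intro sum.cong) (auto simp: rho_s_def)
  also have "\<dots> \<le> (\<Sum>h<H. real h * \<epsilon> / real H)"
    using sum_abs_vis_layer_diff_le[of P1 P2, OF P1 P2 \<pi> \<epsilon>] by (intro sum_mono)
  also have "\<dots> = (real H - 1) / 2 * \<epsilon>"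
    using layer by (cases "H = 0") (auto simp: sum_divide_distrib[symmetric]
        sum_distrib_right[symmetric] gauss)
  finally show ?thesis .
qed

lemma sum_abs_state_policy_reward_diff_le:
  fixes f1 f2 :: "'s::finite \<Rightarrow> real" and R1 R2 :: "'s \<Rightarrow> 'a::finite \<Rightarrow> 'r::finite \<Rightarrow> real"
  assumes R1: "\<And>s a. stoch (R1 s a)" and \<pi>: "policy \<pi>" and f2: "\<And>s. 0 \<le> f2 s"
    and \<epsilon>: "\<And>s a r. \<bar>R1 s a r - R2 s a r\<bar> \<le> \<epsilon>"
  shows "(\<Sum>(s, a, r)\<in>UNIV. \<bar>f1 s * \<pi> s a * R1 s a r - f2 s * \<pi> s a * R2 s a r\<bar>)
           \<le> (\<Sum>s\<in>UNIV. \<bar>f1 s - f2 s\<bar>) + real (card (UNIV :: 'r set)) * \<epsilon> * sum f2 UNIV"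
proof -
  have \<pi>_nonneg: "0 \<le> \<pi> s a" for s a
    using \<pi> by (simp add: policy_def stoch_nonneg)
  have "(\<Sum>(s, a, r)\<in>UNIV. \<bar>f1 s * \<pi> s a * R1 s a r - f2 s * \<pi> s a * R2 s a r\<bar>)
      = (\<Sum>s\<in>UNIV. \<Sum>a\<in>UNIV. \<Sum>r\<in>UNIV.
           \<bar>(f1 s * \<pi> s a) * R1 s a r - (f2 s * \<pi> s a) * R2 s a r\<bar>)"
    by (simp add: sum.cartesian_product UNIV_Times_UNIV[symmetric] del: UNIV_Times_UNIV)
  also have "\<dots> \<le> (\<Sum>s\<in>UNIV. \<Sum>a\<in>UNIV. \<bar>f1 s - f2 s\<bar> * \<pi> s a
                                     + (real (card (UNIV :: 'r set)) * \<epsilon> * f2 s) * \<pi> s a)"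
  proof (intro sum_mono)
    fix s a
    have "(\<Sum>r\<in>UNIV. \<bar>(f1 s * \<pi> s a) * R1 s a r - (f2 s * \<pi> s a) * R2 s a r\<bar>)
        \<le> \<bar>f1 s * \<pi> s a - f2 s * \<pi> s a\<bar> + f2 s * \<pi> s a * (\<Sum>r\<in>UNIV. \<bar>R1 s a r - R2 s a r\<bar>)"
      using R1 f2 \<pi>_nonneg by (intro sum_abs_diff_scaled_le) simp_all
    also have "\<dots> \<le> \<bar>f1 s * \<pi> s a - f2 s * \<pi> s a\<bar> + f2 s * \<pi> s a * (real (card (UNIV :: 'r set)) * \<epsilon>)"
      using f2 \<pi>_nonneg \<epsilon> by (intro add_left_mono mult_left_mono sum_bounded_above) simp_all
    also have "\<dots> = \<bar>f1 s - f2 s\<bar> * \<pi> s a + (real (card (UNIV :: 'r set)) * \<epsilon> * f2 s) * \<pi> s a"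
      using \<pi>_nonneg by (simp add: left_diff_distrib[symmetric] abs_mult)
    finally show "(\<Sum>r\<in>UNIV. \<bar>(f1 s * \<pi> s a) * R1 s a r - (f2 s * \<pi> s a) * R2 s a r\<bar>)
        \<le> \<bar>f1 s - f2 s\<bar> * \<pi> s a + (real (card (UNIV :: 'r set)) * \<epsilon> * f2 s) * \<pi> s a" .
  qed
  also have "\<dots> = (\<Sum>s\<in>UNIV. \<bar>f1 s - f2 s\<bar>) + real (card (UNIV :: 'r set)) * \<epsilon> * sum f2 UNIV"
  proof -
    have "(\<Sum>a\<in>UNIV. \<pi> s a) = 1" for s
      using \<pi> by (simp add: policy_def stoch_sum)
    then show ?thesis
      by (simp add: sum.distrib sum_distrib_left[symmetric] sum_distrib_right[symmetric])
  qed
  finally show ?thesis .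
qed

lemma sum_abs_rho_sar_diff_le:
  fixes P1 P2 :: "'s::finite \<Rightarrow> 'a::finite \<Rightarrow> 's \<Rightarrow> real"
    and R1 R2 :: "'s \<Rightarrow> 'a \<Rightarrow> 'r::finite \<Rightarrow> real"
  assumes P2: "\<And>s a. stoch (P2 s a)" and R1: "\<And>s a. stoch (R1 s a)" and \<pi>: "policy \<pi>"
    and layer: "\<And>s. layer s < H"
    and \<epsilon>: "\<And>s a r. \<bar>R1 s a r - R2 s a r\<bar> \<le> \<epsilon>"
  shows "(\<Sum>(s, a, r)\<in>UNIV. \<bar>rho_sar H layer s0 P1 R1 \<pi> s a r - rho_sar H layer s0 P2 R2 \<pi> s a r\<bar>)
           \<le> (\<Sum>s\<in>UNIV. \<bar>rho_s H layer s0 P1 \<pi> s - rho_s H layer s0 P2 \<pi> s\<bar>)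
              + real (card (UNIV :: 'r set)) * \<epsilon>"
proof -
  let ?\<rho>1 = "rho_s H layer s0 P1 \<pi>" and ?\<rho>2 = "rho_s H layer s0 P2 \<pi>"
  have \<rho>2_nonneg: "0 \<le> ?\<rho>2 s" for s
    unfolding rho_s_def by (intro vis_layer_nonneg P2 \<pi>)
  have "0 \<le> \<epsilon>" using \<epsilon> by (meson order_trans abs_ge_zero)
  have "(\<Sum>(s, a, r)\<in>UNIV. \<bar>rho_sar H layer s0 P1 R1 \<pi> s a r - rho_sar H layer s0 P2 R2 \<pi> s a r\<bar>)
      \<le> (\<Sum>s\<in>UNIV. \<bar>?\<rho>1 s - ?\<rho>2 s\<bar>) + real (card (UNIV :: 'r set)) * \<epsilon> * (\<Sum>s\<in>UNIV. ?\<rho>2 s)"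
    unfolding rho_sar_def by (rule sum_abs_state_policy_reward_diff_le[OF R1 \<pi> \<rho>2_nonneg \<epsilon>])
  also have "\<dots> \<le> (\<Sum>s\<in>UNIV. \<bar>?\<rho>1 s - ?\<rho>2 s\<bar>) + real (card (UNIV :: 'r set)) * \<epsilon>"
    using sum_rho_s_le_1[of P2, OF P2 \<pi> layer] \<open>0 \<le> \<epsilon>\<close> by (simp add: mult_left_le)
  finally show ?thesis .
qed

lemma two_mult_add_mult_le:
  fixes a b c x y :: real
  assumes "1 \<le> a" "1 \<le> b" "1 \<le> c" "0 \<le> x" "0 \<le> y"
  shows "2 * x + c * y \<le> a * (b * c + 1) * x + a * b * c * y"
proof -
  have "1 \<le> b * c" "1 \<le> a * b"
    using assms mult_mono[of 1 b 1 c] mult_mono[of 1 a 1 b] by simp_all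
  have "b * c + 1 \<le> a * (b * c + 1)"
    using assms \<open>1 \<le> b * c\<close> mult_right_mono[of 1 a "b * c + 1"] by simp
  with \<open>1 \<le> b * c\<close> have "2 \<le> a * (b * c + 1)"
    by linarith
  then have "2 * x \<le> a * (b * c + 1) * x"
    using \<open>0 \<le> x\<close> by (rule mult_right_mono)
  moreover have "c \<le> a * b * c"
    using assms \<open>1 \<le> a * b\<close> mult_right_mono[of 1 "a * b" c] by simp
  then have "c * y \<le> a * b * c * y"
    using \<open>0 \<le> y\<close> by (rule mult_right_mono)
  ultimately show ?thesis by simp
qed

theorem lemma8:
  fixes H :: nat and layer :: "'s::finite \<Rightarrow> nat" and s0 :: 's
    and P1 P2 :: "'s \<Rightarrow> 'a::finite \<Rightarrow> 's \<Rightarrow> real"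
    and R1 R2 :: "'s \<Rightarrow> 'a \<Rightarrow> 'r::finite \<Rightarrow> real"
    and \<pi> :: "'s \<Rightarrow> 'a \<Rightarrow> real"
    and epsP epsR :: real
  assumes M1: "fh_mdp H layer s0 P1 R1"
    and M2: "fh_mdp H layer s0 P2 R2"
    and hP: "\<forall>s a. (\<Sum>s'\<in>UNIV. \<bar>P1 s a s' - P2 s a s'\<bar>) \<le> epsP"
    and hR: "\<forall>s a r. \<bar>R1 s a r - R2 s a r\<bar> \<le> epsR"
    and pol: "policy \<pi>"
  shows "(\<Sum>s\<in>UNIV. \<bar>rho_s H layer s0 P1 \<pi> s - rho_s H layer s0 P2 \<pi> s\<bar>)
       + (\<Sum>(s, a, r)\<in>UNIV. \<bar>rho_sar H layer s0 P1 R1 \<pi> s a r - rho_sar H layer s0 P2 R2 \<pi> s a r\<bar>)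
       \<le> real (card (UNIV :: 's set)) * (real (card (UNIV :: 'a set)) * real (card (UNIV :: 'r set)) + 1) * ((real H - 1) / 2) * epsP
         + real (card (UNIV :: 's set)) * real (card (UNIV :: 'a set)) * real (card (UNIV :: 'r set)) * epsR"
proof -
  have P1: "\<And>s a. stoch (P1 s a)" and R1: "\<And>s a. stoch (R1 s a)"
    and P2: "\<And>s a. stoch (P2 s a)" and layer: "\<And>s. layer s < H" and "1 \<le> H"
    using M1 M2 unfolding fh_mdp_def by blast+
  have "0 \<le> epsP" using hP by (meson order_trans sum_nonneg abs_ge_zero)
  have "0 \<le> epsR" using hR by (meson order_trans abs_ge_zero)
  have states: "(\<Sum>s\<in>UNIV. \<bar>rho_s H layer s0 P1 \<pi> s - rho_s H layer s0 P2 \<pi> s\<bar>)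
      \<le> (real H - 1) / 2 * epsP"
    using hP by (intro sum_abs_rho_s_diff_le[of P1 P2, OF P1 P2 pol _ layer]) blast
  have "(\<Sum>(s, a, r)\<in>UNIV. \<bar>rho_sar H layer s0 P1 R1 \<pi> s a r - rho_sar H layer s0 P2 R2 \<pi> s a r\<bar>)
      \<le> (\<Sum>s\<in>UNIV. \<bar>rho_s H layer s0 P1 \<pi> s - rho_s H layer s0 P2 \<pi> s\<bar>)
         + real (card (UNIV :: 'r set)) * epsR"
    using hR by (intro sum_abs_rho_sar_diff_le[of P2 R1, OF P2 R1 pol layer]) blast
  moreover have "2 * ((real H - 1) / 2 * epsP) + real (card (UNIV :: 'r set)) * epsR
      \<le> real (card (UNIV :: 's set)) * (real (card (UNIV :: 'a set)) * real (card (UNIV :: 'r set)) + 1)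
            * ((real H - 1) / 2 * epsP)
         + real (card (UNIV :: 's set)) * real (card (UNIV :: 'a set)) * real (card (UNIV :: 'r set)) * epsR"
    using \<open>1 \<le> H\<close> \<open>0 \<le> epsP\<close> \<open>0 \<le> epsR\<close>
    by (intro two_mult_add_mult_le) (simp_all add: Suc_le_eq finite_UNIV_card_ge_0)
  ultimately show ?thesis
    using states by (simp add: mult.assoc)
qed

end
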